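(* If $n$ is divisible by $8$, then $\hat r_n\le\frac85$.
   Context: Equal responsibilities; chores $e_1,e_2,\ldots,e_m$. A picking order $S\in[n]^m$ allocates $A_i(S)=\{e_r:S_r=i\}$ to agent $i$. For additive $c_i\ge0$ with $c_i(e_1)\ge c_i(e_2)\ge\cdots$, $CS_i=\max\{\frac1nc_i(\{e_1,\ldots,e_m\}),c_i(e_1),c_i(e_n)+c_i(e_{n+1})\}$ (zeros beyond $m$). $r_{n,m}(S)=\sup_i\sup_{c_i}c_i(A_i(S))/CS_i$. A ridge picking order has $m\ge2n$, $S_r=r$ and $S_{n+r}=n-r+1$ for $1\le r\le n$. $\hat r_{n,m}=\min\{r_{n,m}(S):S\text{ ridge of length }m\}$, $\hat r_n=\sup_{m\ge 2n}\hat r_{n,m}$. *)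

theory Defs
  imports "HOL-Library.Extended_Real"
begin

(* Chores are indexed 1..m, agents 1..n. A picking order of length m is a
  function S with S r \<in> {1..n} for r \<in> {1..m} (extensional: 0 elsewhere). *)

definition picking_orders :: "nat \<Rightarrow> nat \<Rightarrow> (nat \<Rightarrow> nat) set" where
  "picking_orders n m = {S. (\<forall>r\<in>{1..m}. S r \<in> {1..n}) \<and> (\<forall>r. r \<notin> {1..m} \<longrightarrow> S r = 0)}"

definition alloc :: "nat \<Rightarrow> (nat \<Rightarrow> nat) \<Rightarrow> nat \<Rightarrow> nat set" where
  "alloc m S i = {r \<in> {1..m}. S r = i}"

definition costs :: "nat \<Rightarrow> (nat \<Rightarrow> real) set" where
  "costs m = {c. (\<forall>r\<in>{1..m}. 0 \<le> c r) \<and> (\<forall>r\<in>{1..m}. \<forall>s\<in>{1..m}. r \<le> s \<longrightarrow> c s \<le> c r)}"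

definition cz :: "nat \<Rightarrow> (nat \<Rightarrow> real) \<Rightarrow> nat \<Rightarrow> real" where
  "cz m c r = (if 1 \<le> r \<and> r \<le> m then c r else 0)"

definition CS :: "nat \<Rightarrow> nat \<Rightarrow> (nat \<Rightarrow> real) \<Rightarrow> real" where
  "CS n m c = max ((\<Sum>r\<in>{1..m}. c r) / real n) (max (cz m c 1) (cz m c n + cz m c (n + 1)))"

definition ratio :: "nat \<Rightarrow> nat \<Rightarrow> (nat \<Rightarrow> nat) \<Rightarrow> ereal" where
  "ratio n m S = (SUP i\<in>{1..n}. SUP c\<in>costs m.
      ereal ((\<Sum>r\<in>alloc m S i. c r) / CS n m c))"

definition ridge :: "nat \<Rightarrow> nat \<Rightarrow> (nat \<Rightarrow> nat) set" where
  "ridge n m = {S \<in> picking_orders n m. 2 * n \<le> m \<and>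
      (\<forall>r\<in>{1..n}. S r = r \<and> S (n + r) = n - r + 1)}"

definition rhat_nm :: "nat \<Rightarrow> nat \<Rightarrow> ereal" where
  "rhat_nm n m = (INF S\<in>ridge n m. ratio n m S)"

definition rhat :: "nat \<Rightarrow> ereal" where
  "rhat n = (SUP m\<in>{2 * n..}. rhat_nm n m)"

end

theory Submission
  imports Defs
begin

(*
  Summation by parts: if for every k the agent holds at most
  8/5 (\<alpha> k/n + \<beta> + \<gamma> ([n \<le> k] + [n < k])) of the chores e_1, ..., e_k, where
  \<alpha> + \<beta> + \<gamma> = 1, then for every non-increasing cost function its bundle costs at
  most 8/5 (\<alpha> (c(e_1) + ... + c(e_m))/n + \<beta> c(e_1) + \<gamma> (c(e_n) + c(e_(n+1))))
  \<le> 8/5 CS.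

  For n = 8h and every m we exhibit a ridge order meeting such prefix bounds for every
  agent. The agents form eight groups of h consecutive agents; after the ridge the chores
  come in blocks of h, each picked in turn by the h agents of one group, the groups following
  a fixed pattern of period 40. An agent of group g gets at most two chores from the ridge and
  one from every block of g, so it suffices that the number of blocks of g among the first
  s + 1 grows like a suitable line in s; by periodicity this is a finite check on one period.
  The weights \<alpha>, \<beta>, \<gamma> are chosen per group.
*)

section \<open>Prefix bounds and the approximation ratio\<close>

lemma sum_mult_le_sum_mult_of_prefix_sums_le:
  fixes u v :: "nat \<Rightarrow> real"
  assumes c: "c \<in> costs m"
    and prefix: "\<And>k. k \<le> m \<Longrightarrow> (\<Sum>r=1..k. u r) \<le> (\<Sum>r=1..k. v r)"
  shows "(\<Sum>r=1..m. c r * u r) \<le> (\<Sum>r=1..m. c r * v r)"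
proof -
  define W where "W k = (\<Sum>r=1..k. v r - u r)" for k
  have W_nonneg: "0 \<le> W k" if "k \<le> m" for k
    using prefix[OF that] by (simp add: W_def sum_subtractf)
  have partial: "c j * W j \<le> (\<Sum>r=1..j. c r * (v r - u r))" if "j \<le> m" for j
    using that
  proof (induction j)
    case 0
    then show ?case by (simp add: W_def)
  next
    case (Suc j)
    have "c (Suc j) * W j \<le> c j * W j"
    proof (cases "j = 0")
      case False
      with Suc.prems c have "c (Suc j) \<le> c j" by (auto simp: costs_def)
      with W_nonneg Suc.prems show ?thesis by (simp add: mult_right_mono)
    qed (simp add: W_def)
    with Suc show ?case by (simp add: W_def algebra_simps)
  qed
  have "0 \<le> c m * W m"
    using c W_nonneg[of m] by (cases "m = 0") (auto simp: costs_def W_def)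
  with partial[of m] show ?thesis by (simp add: sum_subtractf right_diff_distrib)
qed

definition prefix_bound :: "real \<Rightarrow> real \<Rightarrow> real \<Rightarrow> real \<Rightarrow> nat \<Rightarrow> nat \<Rightarrow> real" where
  "prefix_bound \<rho> \<alpha> \<beta> \<gamma> n k =
     \<rho> * (\<alpha> * (real k / real n) + \<beta> + \<gamma> * (of_bool (n \<le> k) + of_bool (n < k)))"

definition prefix_bound_density :: "real \<Rightarrow> real \<Rightarrow> real \<Rightarrow> real \<Rightarrow> nat \<Rightarrow> nat \<Rightarrow> real" where
  "prefix_bound_density \<rho> \<alpha> \<beta> \<gamma> n r =
     \<rho> * (\<alpha> / real n + (if r = 1 then \<beta> else 0) + (if r = n then \<gamma> else 0)
       + (if r = n + 1 then \<gamma> else 0))"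

lemma sum_prefix_bound_density:
  assumes "0 < n" "1 \<le> k"
  shows "(\<Sum>r=1..k. prefix_bound_density \<rho> \<alpha> \<beta> \<gamma> n r) = prefix_bound \<rho> \<alpha> \<beta> \<gamma> n k"
  using assms(2)
proof (induction k rule: dec_induct)
  case base
  show ?case
    using assms(1) by (auto simp: prefix_bound_density_def prefix_bound_def)
next
  case (step k)
  then show ?case
    using assms(1)
    by (auto simp: prefix_bound_density_def prefix_bound_def add_divide_distrib algebra_simps)
qed

lemma sum_mult_prefix_bound_density:
  assumes "0 < n" "n < m"
  shows "(\<Sum>r=1..m. c r * prefix_bound_density \<rho> \<alpha> \<beta> \<gamma> n r) =
    \<rho> * (\<alpha> * ((\<Sum>r=1..m. c r) / real n) + \<beta> * c 1 + \<gamma> * (c n + c (n + 1)))"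
proof -
  have "c r * prefix_bound_density \<rho> \<alpha> \<beta> \<gamma> n r = \<rho> * \<alpha> / real n * c r
      + (if r = 1 then \<rho> * \<beta> * c r else 0) + (if r = n then \<rho> * \<gamma> * c r else 0)
      + (if r = n + 1 then \<rho> * \<gamma> * c r else 0)" for r
    by (simp add: prefix_bound_density_def algebra_simps)
  then show ?thesis
    using assms by (simp add: sum.distrib algebra_simps flip: sum_distrib_left sum_divide_distrib)
qed

lemma convex_combination_le_CS:
  assumes "0 < n" "n < m" "0 \<le> \<alpha>" "0 \<le> \<beta>" "0 \<le> \<gamma>" "\<alpha> + \<beta> + \<gamma> = 1"
  shows "\<alpha> * ((\<Sum>r=1..m. c r) / real n) + \<beta> * c 1 + \<gamma> * (c n + c (n + 1)) \<le> CS n m c"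
proof -
  have "(\<Sum>r=1..m. c r) / real n \<le> CS n m c" "c 1 \<le> CS n m c" "c n + c (n + 1) \<le> CS n m c"
    using assms(1,2) by (auto simp: CS_def cz_def)
  then have "\<alpha> * ((\<Sum>r=1..m. c r) / real n) + \<beta> * c 1 + \<gamma> * (c n + c (n + 1))
      \<le> \<alpha> * CS n m c + \<beta> * CS n m c + \<gamma> * CS n m c"
    using assms(3-5) by (intro add_mono mult_left_mono)
  also have "\<dots> = CS n m c"
    using assms(6) by (metis distrib_right mult_1)
  finally show ?thesis .
qed

lemma bundle_cost_le_of_prefix_counts:
  assumes n: "0 < n" "n < m" and c: "c \<in> costs m" and "0 \<le> \<rho>"
    and weights: "0 \<le> \<alpha>" "0 \<le> \<beta>" "0 \<le> \<gamma>" "\<alpha> + \<beta> + \<gamma> = 1"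
    and counts: "\<And>k. k \<in> {1..m} \<Longrightarrow> real (card (alloc k S i)) \<le> prefix_bound \<rho> \<alpha> \<beta> \<gamma> n k"
  shows "(\<Sum>r\<in>alloc m S i. c r) \<le> \<rho> * CS n m c"
proof -
  define u :: "nat \<Rightarrow> real" where "u r = of_bool (S r = i)" for r
  have prefix: "(\<Sum>r=1..k. u r) \<le> (\<Sum>r=1..k. prefix_bound_density \<rho> \<alpha> \<beta> \<gamma> n r)" if "k \<le> m" for k
  proof (cases "k = 0")
    case False
    have "(\<Sum>r=1..k. u r) = real (card (alloc k S i))"
      by (simp add: u_def alloc_def Int_def)
    also have "\<dots> \<le> prefix_bound \<rho> \<alpha> \<beta> \<gamma> n k"
      using counts that False by simp
    finally show ?thesis
      using sum_prefix_bound_density[OF n(1)] False by simp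
  qed simp
  have "(\<Sum>r\<in>alloc m S i. c r) = (\<Sum>r=1..m. c r * u r)"
    by (simp add: u_def alloc_def Int_def)
  also have "\<dots> \<le> (\<Sum>r=1..m. c r * prefix_bound_density \<rho> \<alpha> \<beta> \<gamma> n r)"
    by (rule sum_mult_le_sum_mult_of_prefix_sums_le[OF c prefix])
  also have "\<dots> = \<rho> * (\<alpha> * ((\<Sum>r=1..m. c r) / real n) + \<beta> * c 1 + \<gamma> * (c n + c (n + 1)))"
    by (rule sum_mult_prefix_bound_density[OF n])
  also have "\<dots> \<le> \<rho> * CS n m c"
    using assms by (intro mult_left_mono convex_combination_le_CS) auto
  finally show ?thesis .
qed

lemma ratio_le_of_prefix_counts:
  assumes n: "0 < n" "n < m" and "0 \<le> \<rho>"
    and counts: "\<And>i. i \<in> {1..n} \<Longrightarrow> \<exists>\<alpha> \<beta> \<gamma>. 0 \<le> \<alpha> \<and> 0 \<le> \<beta> \<and> 0 \<le> \<gamma> \<and> \<alpha> + \<beta> + \<gamma> = 1 \<and>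
        (\<forall>k\<in>{1..m}. real (card (alloc k S i)) \<le> prefix_bound \<rho> \<alpha> \<beta> \<gamma> n k)"
  shows "ratio n m S \<le> ereal \<rho>"
  unfolding ratio_def
proof (intro SUP_least)
  fix i c
  assume i: "i \<in> {1..n}" and c: "c \<in> costs m"
  from counts[OF i] obtain \<alpha> \<beta> \<gamma>
    where weights: "0 \<le> \<alpha>" "0 \<le> \<beta>" "0 \<le> \<gamma>" "\<alpha> + \<beta> + \<gamma> = 1"
      and bound: "\<forall>k\<in>{1..m}. real (card (alloc k S i)) \<le> prefix_bound \<rho> \<alpha> \<beta> \<gamma> n k"
    by blast
  have bundle_cost: "(\<Sum>r\<in>alloc m S i. c r) \<le> \<rho> * CS n m c"
    using bound by (intro bundle_cost_le_of_prefix_counts[OF n c \<open>0 \<le> \<rho>\<close> weights]) auto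
  have "0 \<le> c 1"
    using c n by (simp add: costs_def)
  then have "0 \<le> CS n m c"
    using n by (auto simp: CS_def cz_def le_max_iff_disj)
  with bundle_cost \<open>0 \<le> \<rho>\<close> show "ereal ((\<Sum>r\<in>alloc m S i. c r) / CS n m c) \<le> ereal \<rho>"
    by (cases "CS n m c = 0") (simp_all add: divide_le_eq)
qed

lemma prefix_bound_mono:
  assumes "0 \<le> \<rho>" "0 \<le> \<alpha>" "0 \<le> \<gamma>" "j \<le> k"
  shows "prefix_bound \<rho> \<alpha> \<beta> \<gamma> n j \<le> prefix_bound \<rho> \<alpha> \<beta> \<gamma> n k"
proof -
  have "real j / real n \<le> real k / real n"
    using assms(4) by (simp add: divide_right_mono)
  moreover have "(of_bool (n \<le> j) :: real) \<le> of_bool (n \<le> k)" "(of_bool (n < j) :: real) \<le> of_bool (n < k)"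
    using assms(4) by auto
  ultimately show ?thesis
    unfolding prefix_bound_def using assms(1-3) by (intro mult_left_mono add_mono) auto
qed

lemma card_alloc_ridge_prefix_le:
  assumes S: "S \<in> ridge n m" and k: "k \<le> 2 * n"
  shows "card (alloc k S i) \<le> of_bool (i \<le> k) + of_bool (2 * n + 1 - i \<le> k)"
proof -
  let ?first = "if i \<le> k then {i} else {}"
    and ?second = "if 2 * n + 1 - i \<le> k then {2 * n + 1 - i} else {}"
  have "alloc k S i \<subseteq> ?first \<union> ?second"
  proof
    fix r
    assume r: "r \<in> alloc k S i"
    then have "1 \<le> r" "r \<le> k" "S r = i"
      by (auto simp: alloc_def)
    moreover have "S r = r" if "r \<le> n"
      using S that \<open>1 \<le> r\<close> by (auto simp: ridge_def)
    moreover have "S r = 2 * n + 1 - r" if "n < r"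
      using S that k \<open>r \<le> k\<close> by (auto simp: ridge_def dest!: bspec[of _ _ "r - n"])
    ultimately show "r \<in> ?first \<union> ?second"
      using k by (cases "r \<le> n") auto
  qed
  then have "card (alloc k S i) \<le> card (?first \<union> ?second)"
    by (intro card_mono) auto
  also have "\<dots> \<le> card ?first + card ?second"
    by (rule card_Un_le)
  finally show ?thesis
    by (simp split: if_splits)
qed

lemma ridge_prefix_count_le_prefix_bound:
  assumes S: "S \<in> ridge n m" and i: "i \<in> {1..n}" and k: "k \<le> 2 * n"
    and weights: "0 \<le> \<alpha>" "0 \<le> \<beta>" "0 \<le> \<gamma>" "\<alpha> + \<beta> + \<gamma> = 1" and \<rho>: "1 \<le> \<rho>"
    and early: "1 \<le> \<rho> * (\<alpha> * (real i / real n) + \<beta>)"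
    and late: "2 \<le> \<rho> * (\<alpha> * (2 - real i / real n) + \<beta> + 2 * \<gamma>)"
  shows "real (card (alloc k S i)) \<le> prefix_bound \<rho> \<alpha> \<beta> \<gamma> n k"
proof -
  have n: "0 < real n"
    using i by simp
  have mono: "prefix_bound \<rho> \<alpha> \<beta> \<gamma> n j \<le> prefix_bound \<rho> \<alpha> \<beta> \<gamma> n k" if "j \<le> k" for j
    using prefix_bound_mono[OF _ weights(1,3) that] \<rho> by simp
  have count: "card (alloc k S i) \<le> of_bool (i \<le> k) + of_bool (2 * n + 1 - i \<le> k)"
    by (rule card_alloc_ridge_prefix_le[OF S k])
  consider "k < i" | "i \<le> k" "k < 2 * n + 1 - i" | "2 * n + 1 - i \<le> k"
    by linarith
  then show ?thesis
  proof cases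
    case 1
    moreover have "k < 2 * n + 1 - i"
      using 1 i by simp
    ultimately have "card (alloc k S i) = 0"
      using count by simp
    then show ?thesis
      using weights \<rho> by (simp add: prefix_bound_def)
  next
    case 2
    with count have "card (alloc k S i) \<le> 1"
      by simp
    moreover have "1 \<le> prefix_bound \<rho> \<alpha> \<beta> \<gamma> n k"
    proof (cases "n \<le> k")
      case True
      have "prefix_bound \<rho> \<alpha> \<beta> \<gamma> n n = \<rho>"
        using n weights(4) by (simp add: prefix_bound_def)
      then show ?thesis
        using mono[OF True] \<rho> by linarith
    next
      case False
      with 2 have "prefix_bound \<rho> \<alpha> \<beta> \<gamma> n i = \<rho> * (\<alpha> * (real i / real n) + \<beta>)"
        by (simp add: prefix_bound_def)
      then show ?thesis
        using mono[OF \<open>i \<le> k\<close>] early by linarith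
    qed
    ultimately show ?thesis
      by linarith
  next
    case 3
    then have "n < k"
      using i by auto
    have "2 * real n \<le> real i + real k"
      using 3 i by linarith
    then have "2 \<le> real i / real n + real k / real n"
      using n by (simp add: le_divide_eq flip: add_divide_distrib)
    then have "2 - real i / real n \<le> real k / real n"
      by linarith
    then have "\<alpha> * (2 - real i / real n) \<le> \<alpha> * (real k / real n)"
      by (rule mult_left_mono[OF _ weights(1)])
    then have "\<rho> * (\<alpha> * (2 - real i / real n) + \<beta> + 2 * \<gamma>) \<le> prefix_bound \<rho> \<alpha> \<beta> \<gamma> n k"
      unfolding prefix_bound_def using \<open>n < k\<close> \<rho> by (intro mult_left_mono) auto
    moreover have "card (alloc k S i) \<le> 2"
      using count by (simp add: of_bool_def split: if_splits)
    ultimately show ?thesis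
      using late by linarith
  qed
qed

section \<open>A ridge order for n divisible by 8\<close>

definition tail_pattern :: "nat list" where
  "tail_pattern = [6, 7, 8, 5, 4, 6, 7, 3, 8, 5, 2, 6, 1, 7, 4, 8, 6, 5, 3, 7,
                   6, 8, 2, 4, 5, 7, 1, 6, 3, 8, 5, 7, 4, 6, 2, 8, 6, 5, 3, 1]"

definition tail_group :: "nat \<Rightarrow> nat" where
  "tail_group s = tail_pattern ! (s mod 40)"

definition group_count :: "nat \<Rightarrow> nat \<Rightarrow> nat" where
  "group_count g j = length (filter (\<lambda>s. tail_group s = g) [0..<j])"

definition env_den :: "nat \<Rightarrow> nat" where
  "env_den g = [40, 35, 10, 25, 20, 5, 35, 20] ! (g - 1)"

definition env_slope :: "nat \<Rightarrow> nat" where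
  "env_slope g = [3, 3, 1, 3, 3, 1, 6, 3] ! (g - 1)"

definition env_const :: "nat \<Rightarrow> nat" where
  "env_const g = [8, 10, 4, 14, 16, 6, 42, 24] ! (g - 1)"

lemma length_tail_pattern: "length tail_pattern = 40"
  by (simp add: tail_pattern_def)

lemma tail_group_range: "tail_group s \<in> {1..8}"
proof -
  have "tail_group s \<in> set tail_pattern"
    unfolding tail_group_def by (rule nth_mem) (simp add: length_tail_pattern)
  moreover have "set tail_pattern \<subseteq> {1..8}"
    by (simp add: tail_pattern_def)
  ultimately show ?thesis
    by blast
qed

lemma group_count_eq_card: "group_count g j = card {s. s < j \<and> tail_group s = g}"
proof -
  have "set (filter (\<lambda>s. tail_group s = g) [0..<j]) = {s. s < j \<and> tail_group s = g}"
    by auto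
  then show ?thesis
    unfolding group_count_def by (metis distinct_card distinct_filter distinct_upt)
qed

lemma group_count_take:
  assumes "j \<le> 40"
  shows "group_count g j = length (filter (\<lambda>x. x = g) (take j tail_pattern))"
proof -
  have "take j tail_pattern = map tail_group [0..<j]"
    using assms length_tail_pattern by (intro nth_equalityI) (auto simp: tail_group_def)
  then show ?thesis
    by (simp add: group_count_def filter_map o_def)
qed

lemma group_count_add_period: "group_count g (40 + j) = group_count g 40 + group_count g j"
proof -
  have split: "[0..<a + j] = [0..<a] @ map (\<lambda>s. s + a) [0..<j]" for a
    unfolding map_add_upt add.commute[of j a] by (rule upt_add_eq_append) simp
  have shift: "(\<lambda>s. tail_group (s + 40) = g) = (\<lambda>s. tail_group s = g)"
    by (simp add: tail_group_def)
  show ?thesis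
    unfolding group_count_def split filter_append filter_map length_append length_map o_def shift ..
qed

lemma envelope_first_period:
  "list_all (\<lambda>g. list_all (\<lambda>s. env_den g * length (filter (\<lambda>x. x = g) (take (Suc s) tail_pattern))
      \<le> env_slope g * s + env_const g) [0..<40]) [1..<9]"
  by (simp add: tail_pattern_def env_den_def env_slope_def env_const_def upt_rec)

lemma envelope_period_growth:
  "list_all (\<lambda>g. env_den g * length (filter (\<lambda>x. x = g) tail_pattern) \<le> 40 * env_slope g) [1..<9]"
  by (simp add: tail_pattern_def env_den_def env_slope_def upt_rec)

lemma group_count_le_envelope:
  assumes g: "g \<in> {1..8}"
  shows "env_den g * group_count g (Suc s) \<le> env_slope g * s + env_const g"
proof (induction s rule: less_induct)
  case (less s)
  show ?case
  proof (cases "s < 40")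
    case True
    then have "s \<in> set [0..<40]" "g \<in> set [1..<9]"
      using g by auto
    with envelope_first_period show ?thesis
      unfolding list_all_iff group_count_take[OF Suc_leI[OF True]] by blast
  next
    case False
    then obtain s' where s: "s = 40 + s'"
      using le_Suc_ex not_less by blast
    have "g \<in> set [1..<9]"
      using g by auto
    moreover have "group_count g 40 = length (filter (\<lambda>x. x = g) tail_pattern)"
      using group_count_take[of 40 g] length_tail_pattern by simp
    ultimately have "env_den g * group_count g 40 \<le> 40 * env_slope g"
      using envelope_period_growth unfolding list_all_iff by simp
    moreover have "env_den g * group_count g (Suc s') \<le> env_slope g * s' + env_const g"
      using less s by simp
    moreover have "group_count g (Suc s) = group_count g 40 + group_count g (Suc s')"
      using group_count_add_period[of g "Suc s'"] s by simp
    moreover have "env_slope g * s = 40 * env_slope g + env_slope g * s'"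
      using s by (simp add: add_mult_distrib2)
    ultimately show ?thesis
      by (simp add: add_mult_distrib2)
  qed
qed

(* Chore 2n + 1 + s h + j, for j < h = n div 8, goes to agent j + 1 of group tail_group s,
   group g being the agents (g - 1) h + 1, ..., g h. *)
definition ridge_schedule :: "nat \<Rightarrow> nat \<Rightarrow> nat \<Rightarrow> nat" where
  "ridge_schedule n m r =
    (if 1 \<le> r \<and> r \<le> n then r
     else if n < r \<and> r \<le> 2 * n then 2 * n + 1 - r
     else if 2 * n < r \<and> r \<le> m then
       (tail_group ((r - 2 * n - 1) div (n div 8)) - 1) * (n div 8) + (r - 2 * n - 1) mod (n div 8) + 1
     else 0)"

lemma ridge_schedule_tail:
  assumes "n = 8 * h" "2 * n < r" "r \<le> m"
  shows "ridge_schedule n m r = (tail_group ((r - 2 * n - 1) div h) - 1) * h + (r - 2 * n - 1) mod h + 1"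
  using assms by (simp add: ridge_schedule_def)

lemma ridge_schedule_in_ridge:
  assumes n: "n = 8 * h" "0 < h" and m: "2 * n \<le> m"
  shows "ridge_schedule n m \<in> ridge n m"
proof -
  have "ridge_schedule n m r \<in> {1..n}" if r: "r \<in> {1..m}" for r
  proof (cases "r \<le> 2 * n")
    case True
    then show ?thesis
      using r by (auto simp: ridge_schedule_def)
  next
    case False
    let ?p = "r - 2 * n - 1"
    have "(tail_group (?p div h) - 1) * h \<le> 7 * h"
      using tail_group_range[of "?p div h"] by (intro mult_le_mono1) auto
    moreover have "?p mod h < h"
      using n(2) by simp
    ultimately have "(tail_group (?p div h) - 1) * h + ?p mod h + 1 \<le> n"
      using n(1) by linarith
    then show ?thesis
      using False r n(1) by (simp add: ridge_schedule_tail)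
  qed
  then show ?thesis
    using m by (auto simp: ridge_def picking_orders_def ridge_schedule_def)
qed

lemma ridge_schedule_tail_eq_iff:
  assumes n: "n = 8 * h" "0 < h" and r: "2 * n < r" "r \<le> m" and i: "1 \<le> i"
  shows "ridge_schedule n m r = i \<longleftrightarrow>
    tail_group ((r - 2 * n - 1) div h) = (i - 1) div h + 1 \<and> (r - 2 * n - 1) mod h = (i - 1) mod h"
proof -
  define p where "p = r - 2 * n - 1"
  define G where "G = tail_group (p div h)"
  have "1 \<le> G"
    using tail_group_range by (simp add: G_def)
  have "ridge_schedule n m r = i \<longleftrightarrow> (G - 1) * h + p mod h = i - 1"
    using ridge_schedule_tail[OF n(1) r] i by (auto simp: G_def p_def)
  also have "\<dots> \<longleftrightarrow> G - 1 = (i - 1) div h \<and> p mod h = (i - 1) mod h"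
  proof
    assume eq: "(G - 1) * h + p mod h = i - 1"
    have "(i - 1) div h = G - 1" "(i - 1) mod h = p mod h"
      unfolding eq[symmetric] using n(2) by (simp_all add: add.commute[of "(G - 1) * h"])
    then show "G - 1 = (i - 1) div h \<and> p mod h = (i - 1) mod h"
      by simp
  next
    assume "G - 1 = (i - 1) div h \<and> p mod h = (i - 1) mod h"
    then show "(G - 1) * h + p mod h = i - 1"
      by (metis div_mult_mod_eq)
  qed
  also have "\<dots> \<longleftrightarrow> G = (i - 1) div h + 1 \<and> p mod h = (i - 1) mod h"
    using \<open>1 \<le> G\<close> by auto
  finally show ?thesis
    by (simp add: G_def p_def)
qed

lemma card_tail_alloc_le_group_count:
  assumes n: "n = 8 * h" "0 < h" and i: "i \<in> {1..n}" and k: "k \<le> m"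
  shows "card {r \<in> {2 * n + 1..k}. ridge_schedule n m r = i}
    \<le> group_count ((i - 1) div h + 1) (Suc ((k - 2 * n - 1) div h))"
proof -
  let ?block = "\<lambda>r. (r - 2 * n - 1) div h"
  define T where "T = {r \<in> {2 * n + 1..k}. ridge_schedule n m r = i}"
  have tail: "tail_group (?block r) = (i - 1) div h + 1 \<and> (r - 2 * n - 1) mod h = (i - 1) mod h"
    if "r \<in> T" for r
    using that ridge_schedule_tail_eq_iff[OF n, of r m i] i k by (auto simp: T_def)
  have "card T \<le> group_count ((i - 1) div h + 1) (Suc (?block k))"
    unfolding group_count_eq_card
  proof (rule card_inj_on_le)
    show "inj_on ?block T"
    proof (rule inj_onI)
      fix r r'
      assume "r \<in> T" "r' \<in> T" "?block r = ?block r'"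
      then have "r - 2 * n - 1 = r' - 2 * n - 1"
        using tail by (metis div_mult_mod_eq)
      with \<open>r \<in> T\<close> \<open>r' \<in> T\<close> show "r = r'"
        by (auto simp: T_def)
    qed
    show "?block ` T \<subseteq> {s. s < Suc (?block k) \<and> tail_group s = (i - 1) div h + 1}"
    proof
      fix s
      assume "s \<in> ?block ` T"
      then obtain r where "r \<in> T" "s = ?block r"
        by blast
      moreover have "?block r \<le> ?block k"
        using \<open>r \<in> T\<close> by (intro div_le_mono) (auto simp: T_def)
      ultimately show "s \<in> {s. s < Suc (?block k) \<and> tail_group s = (i - 1) div h + 1}"
        using tail by auto
    qed
  qed simp
  then show ?thesis
    by (simp add: T_def)
qed

lemma card_alloc_ridge_schedule_le:
  assumes n: "n = 8 * h" "0 < h" and i: "i \<in> {1..n}" and k: "2 * n < k" "k \<le> m"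
  shows "card (alloc k (ridge_schedule n m) i)
    \<le> 2 + group_count ((i - 1) div h + 1) (Suc ((k - 2 * n - 1) div h))"
proof -
  let ?S = "ridge_schedule n m"
  have "alloc k ?S i = alloc (2 * n) ?S i \<union> {r \<in> {2 * n + 1..k}. ?S r = i}"
    using k by (auto simp: alloc_def)
  then have "card (alloc k ?S i) \<le> card (alloc (2 * n) ?S i) + card {r \<in> {2 * n + 1..k}. ?S r = i}"
    by (metis card_Un_le)
  moreover have "card (alloc (2 * n) ?S i) \<le> 2"
    using card_alloc_ridge_prefix_le[OF ridge_schedule_in_ridge[OF n], of m "2 * n" i] k
    by (simp add: of_bool_def split: if_splits)
  ultimately show ?thesis
    using card_tail_alloc_le_group_count[OF n i k(2)] by linarith
qed

lemma tail_count_le_prefix_bound: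
  fixes N t a b c :: nat
  assumes n: "n = 8 * h" "0 < h" and k: "2 * n < k"
    and count: "N \<le> 2 + t"
    and envelope: "a * t \<le> b * ((k - 2 * n - 1) div h) + c" "0 < a"
    and slope: "8 * real b \<le> \<rho> * \<alpha> * real a"
    and offset: "real c + 2 * real a \<le> real a * \<rho> * (2 * \<alpha> + \<beta> + 2 * \<gamma>)"
  shows "real N \<le> prefix_bound \<rho> \<alpha> \<beta> \<gamma> n k"
proof -
  define s where "s = (k - 2 * n - 1) div h"
  define y where "y = real k / real n"
  have "s * h \<le> k - 2 * n - 1"
    unfolding s_def by (rule div_times_less_eq_dividend)
  then have "real s * real h \<le> real k - 2 * real n"
    using k by (simp flip: of_nat_mult of_nat_diff)
  then have s: "real s \<le> 8 * (y - 2)"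
    using n by (simp add: y_def field_simps)
  have "8 * real b * real s \<le> \<rho> * \<alpha> * real a * real s"
    using slope by (rule mult_right_mono) simp
  also have "\<dots> \<le> \<rho> * \<alpha> * real a * (8 * (y - 2))"
    using s slope by (intro mult_left_mono) auto
  finally have "real b * real s \<le> \<rho> * \<alpha> * real a * (y - 2)"
    by (simp add: algebra_simps)
  moreover have "real a * real t \<le> real b * real s + real c"
    using envelope(1) unfolding s_def by (simp flip: of_nat_mult of_nat_add)
  moreover have "real a * prefix_bound \<rho> \<alpha> \<beta> \<gamma> n k
      = \<rho> * \<alpha> * real a * (y - 2) + real a * \<rho> * (2 * \<alpha> + \<beta> + 2 * \<gamma>)"
    using k by (simp add: prefix_bound_def y_def algebra_simps)
  ultimately have "real a * (2 + real t) \<le> real a * prefix_bound \<rho> \<alpha> \<beta> \<gamma> n k"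
    using offset by (simp add: algebra_simps)
  then show ?thesis
    using count envelope(2) by simp
qed

definition group_weights :: "nat \<Rightarrow> real \<times> real \<times> real" where
  "group_weights g = [(3/8, 5/8, 0), (3/7, 4/7, 0), (1/2, 1/2, 0), (3/5, 2/5, 0),
                      (3/4, 1/4, 0), (1, 0, 0), (6/7, 0, 1/7), (3/4, 0, 1/4)] ! (g - 1)"

lemma group_weights_certificate:
  assumes "g \<in> {1..8}" and "group_weights g = (\<alpha>, \<beta>, \<gamma>)"
  shows "0 \<le> \<alpha>" "0 \<le> \<beta>" "0 \<le> \<gamma>" "\<alpha> + \<beta> + \<gamma> = 1"
    and "1 \<le> 8/5 * (\<alpha> * ((real g - 1) / 8) + \<beta>)"
    and "2 \<le> 8/5 * (\<alpha> * (2 - real g / 8) + \<beta> + 2 * \<gamma>)"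
    and "0 < env_den g" "8 * real (env_slope g) \<le> 8/5 * \<alpha> * real (env_den g)"
    and "real (env_const g) + 2 * real (env_den g) \<le> real (env_den g) * (8/5) * (2 * \<alpha> + \<beta> + 2 * \<gamma>)"
  using assms
  by (auto simp: group_weights_def env_den_def env_slope_def env_const_def
      numeral_eq_Suc atLeastAtMostSuc_conv)

lemma agent_group_position:
  assumes n: "n = 8 * h" "0 < h" and i: "i \<in> {1..n}"
  defines "g \<equiv> (i - 1) div h + 1"
  shows "g \<in> {1..8}" and "(real g - 1) / 8 \<le> real i / real n" and "real i / real n \<le> real g / 8"
proof -
  have "(i - 1) div h < 8"
    using i n by (auto simp: div_less_iff_less_mult)
  then show "g \<in> {1..8}"
    by (simp add: g_def)
  have "(g - 1) * h \<le> i - 1" "i - 1 < g * h"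
    unfolding g_def using n(2) div_times_less_eq_dividend dividend_less_div_times by auto
  then have "real ((g - 1) * h) < real i" "real i \<le> real (g * h)"
    using i by (simp_all only: of_nat_less_iff of_nat_le_iff) auto
  moreover have "real (g - 1) = real g - 1"
    by (simp add: g_def)
  ultimately show "(real g - 1) / 8 \<le> real i / real n" "real i / real n \<le> real g / 8"
    using n by (simp_all add: field_simps)
qed

lemma ridge_schedule_prefix_counts:
  assumes n: "n = 8 * h" "0 < h" and i: "i \<in> {1..n}" and m: "2 * n \<le> m"
  shows "\<exists>\<alpha> \<beta> \<gamma>. 0 \<le> \<alpha> \<and> 0 \<le> \<beta> \<and> 0 \<le> \<gamma> \<and> \<alpha> + \<beta> + \<gamma> = 1 \<and>
    (\<forall>k\<in>{1..m}. real (card (alloc k (ridge_schedule n m) i)) \<le> prefix_bound (8/5) \<alpha> \<beta> \<gamma> n k)"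
proof -
  define g where "g = (i - 1) div h + 1"
  note position = agent_group_position[OF n i, folded g_def]
  obtain \<alpha> \<beta> \<gamma> where "group_weights g = (\<alpha>, \<beta>, \<gamma>)"
    by (metis prod_cases3)
  note cert = group_weights_certificate[OF position(1) this]
  have "\<alpha> * ((real g - 1) / 8) \<le> \<alpha> * (real i / real n)"
    using position(2) cert(1) by (rule mult_left_mono)
  then have early: "1 \<le> 8/5 * (\<alpha> * (real i / real n) + \<beta>)"
    using cert(5) unfolding distrib_left by linarith
  have "\<alpha> * (2 - real g / 8) \<le> \<alpha> * (2 - real i / real n)"
    using position(3) cert(1) by (intro mult_left_mono) simp_all
  then have late: "2 \<le> 8/5 * (\<alpha> * (2 - real i / real n) + \<beta> + 2 * \<gamma>)"
    using cert(6) unfolding distrib_left by linarith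
  have "real (card (alloc k (ridge_schedule n m) i)) \<le> prefix_bound (8/5) \<alpha> \<beta> \<gamma> n k"
    if k: "k \<in> {1..m}" for k
  proof (cases "k \<le> 2 * n")
    case True
    with cert early late show ?thesis
      by (intro ridge_prefix_count_le_prefix_bound[OF ridge_schedule_in_ridge[OF n m] i]) auto
  next
    case False
    with k cert show ?thesis
      by (intro tail_count_le_prefix_bound[OF n _ card_alloc_ridge_schedule_le[OF n i, folded g_def]
            group_count_le_envelope[OF position(1)]]) auto
  qed
  with cert show ?thesis
    by blast
qed

theorem lemma6:
  fixes n :: nat
  assumes "0 < n" and "8 dvd n"
  shows "rhat n \<le> ereal (8 / 5)"
proof -
  obtain h where n: "n = 8 * h"
    using assms(2) by blast
  with assms(1) have h: "0 < h"
    by simp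
  have "rhat_nm n m \<le> ereal (8 / 5)" if m: "2 * n \<le> m" for m
  proof -
    have "rhat_nm n m \<le> ratio n m (ridge_schedule n m)"
      unfolding rhat_nm_def by (rule INF_lower) (rule ridge_schedule_in_ridge[OF n h m])
    also have "\<dots> \<le> ereal (8 / 5)"
      using assms(1) m by (intro ratio_le_of_prefix_counts ridge_schedule_prefix_counts[OF n h]) auto
    finally show ?thesis .
  qed
  then show ?thesis
    unfolding rhat_def by (auto intro: SUP_least)
qed

end
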